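(* Let $\alpha$ be a continuous rotationally symmetric norm and $n\ge1$. Then \[H^{\alpha}=M_{\alpha}(z^n)\oplus zM_{\alpha}(z^n)\oplus\cdots\oplus z^{n-1}M_{\alpha}(z^n),\] where $\oplus$ is the algebraic direct sum.
   Context: $\mathbb T$ is the unit circle with normalized Lebesgue measure $m$. A norm $\alpha$ on $L^\infty$ is rotationally symmetric if $\alpha(1)=1$, $\alpha(|f|)=\alpha(f)$, and $\alpha(f_w)=\alpha(f)$ for all $f\in L^\infty$, $w\in\mathbb T$, where $f_w(z)=f(\overline w z)$; it is continuous if $\alpha(\chi_E)\to0$ as $m(E)\to0^+$. It is extended to measurable $f$ by $\alpha(f)=\sup\{\alpha(s): s\text{ simple},0\le s\le|f|\}$. $H^\alpha$ is the $\alpha$-closure of $H^\infty$. $H^\infty(z^n)=\{g(z^n): g\in H^\infty\}$ and $M_\alpha(z^n)$ is its $\alpha$-closure. *)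

theory Defs
  imports "HOL-Analysis.Analysis"
begin

text \<open>Normalized Lebesgue measure m on the unit circle T, realised as a probability
  measure on the complex plane (Borel sets) concentrated on T: the push-forward of the
  uniform distribution on [0, 2 pi) under t |-> cis t.  Functions on T are modelled as
  functions complex => complex; only their values on T (up to m-null sets) matter.\<close>
definition circ :: "complex measure" where
  "circ = distr (uniform_measure lborel {0..<2*pi}) borel cis"

definition Linf :: "(complex \<Rightarrow> complex) set" where
  "Linf = {f \<in> borel_measurable circ. \<exists>C. AE z in circ. cmod (f z) \<le> C}"

definition rot :: "complex \<Rightarrow> (complex \<Rightarrow> complex) \<Rightarrow> (complex \<Rightarrow> complex)" where
  "rot w f = (\<lambda>z. f (cnj w * z))"

text \<open>alpha is a norm on L^infinity (respecting a.e. equality, i.e. well defined on classes).\<close>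
definition Linf_norm :: "((complex \<Rightarrow> complex) \<Rightarrow> real) \<Rightarrow> bool" where
  "Linf_norm \<alpha> \<longleftrightarrow>
     (\<forall>f\<in>Linf. \<forall>g\<in>Linf. (AE z in circ. f z = g z) \<longrightarrow> \<alpha> f = \<alpha> g) \<and>
     (\<forall>f\<in>Linf. 0 \<le> \<alpha> f) \<and>
     (\<forall>f\<in>Linf. \<alpha> f = 0 \<longrightarrow> (AE z in circ. f z = 0)) \<and>
     (\<forall>f\<in>Linf. \<forall>c::complex. \<alpha> (\<lambda>z. c * f z) = cmod c * \<alpha> f) \<and>
     (\<forall>f\<in>Linf. \<forall>g\<in>Linf. \<alpha> (\<lambda>z. f z + g z) \<le> \<alpha> f + \<alpha> g)"

definition rot_sym_norm :: "((complex \<Rightarrow> complex) \<Rightarrow> real) \<Rightarrow> bool" where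
  "rot_sym_norm \<alpha> \<longleftrightarrow> Linf_norm \<alpha> \<and>
     \<alpha> (\<lambda>z. 1) = 1 \<and>
     (\<forall>f\<in>Linf. \<alpha> (\<lambda>z. complex_of_real (cmod (f z))) = \<alpha> f) \<and>
     (\<forall>f\<in>Linf. \<forall>w. cmod w = 1 \<longrightarrow> \<alpha> (rot w f) = \<alpha> f)"

definition continuous_norm :: "((complex \<Rightarrow> complex) \<Rightarrow> real) \<Rightarrow> bool" where
  "continuous_norm \<alpha> \<longleftrightarrow>
     (\<forall>\<epsilon>>0. \<exists>\<delta>>0. \<forall>E\<in>sets circ. 0 < measure circ E \<and> measure circ E < \<delta> \<longrightarrow>
        \<alpha> (indicator E) < \<epsilon>)"

definition alpha_ext :: "((complex \<Rightarrow> complex) \<Rightarrow> real) \<Rightarrow> (complex \<Rightarrow> complex) \<Rightarrow> ereal" where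
  "alpha_ext \<alpha> f = (SUP s \<in> {s :: complex \<Rightarrow> real. simple_function circ s \<and>
        (\<forall>z. 0 \<le> s z \<and> s z \<le> cmod (f z))}. ereal (\<alpha> (\<lambda>z. complex_of_real (s z))))"

definition alpha_closure :: "((complex \<Rightarrow> complex) \<Rightarrow> real) \<Rightarrow> (complex \<Rightarrow> complex) set
     \<Rightarrow> (complex \<Rightarrow> complex) set" where
  "alpha_closure \<alpha> S = {f \<in> borel_measurable circ. \<exists>h. (\<forall>k. h k \<in> S) \<and>
       (\<lambda>k. alpha_ext \<alpha> (\<lambda>z. f z - h k z)) \<longlonglongrightarrow> 0}"

text \<open>H^infinity: elements of L^infinity whose Fourier coefficients of negative index vanish.\<close>
definition Hinf :: "(complex \<Rightarrow> complex) set" where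
  "Hinf = {f \<in> Linf. \<forall>k::nat. k \<ge> 1 \<longrightarrow> integral\<^sup>L circ (\<lambda>z. f z * z ^ k) = 0}"

definition Hinf_pow :: "nat \<Rightarrow> (complex \<Rightarrow> complex) set" where
  "Hinf_pow n = {(\<lambda>z. g (z ^ n)) | g. g \<in> Hinf}"

definition H_alpha :: "((complex \<Rightarrow> complex) \<Rightarrow> real) \<Rightarrow> (complex \<Rightarrow> complex) set" where
  "H_alpha \<alpha> = alpha_closure \<alpha> Hinf"

definition M_alpha :: "((complex \<Rightarrow> complex) \<Rightarrow> real) \<Rightarrow> nat \<Rightarrow> (complex \<Rightarrow> complex) set" where
  "M_alpha \<alpha> n = alpha_closure \<alpha> (Hinf_pow n)"

end

(* Averaging over the n-th roots of unity, P_j h (z) = (1/n) sum_w cnj(w)^j h(w z) keeps exactly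
   the Fourier modes z^k of h with k = j (mod n), and h = sum_(j<n) P_j h. The function
   cnj(z)^j P_j h (z) is invariant under rotation by n-th roots of unity, hence of the form g(z^n),
   and g lies in H^infinity when h does. Rotation invariance of alpha makes P_j bounded for the
   extension of alpha, so approximating f in H^alpha by elements of H^infinity yields the components
   z^j g_j of f with g_j in M_alpha(z^n); conversely, sums of such components are limits of elements
   of H^infinity. For uniqueness, elements of M_alpha(z^n) are a.e. invariant under the n-th roots of
   unity, so P_i recovers z^i g_i from sum_j z^j g_j. Underneath lies the invariance of the measure on
   the circle under z -> c z^n for |c| = 1, which reduces to periodicity of integrands on [0, 2 pi). *)

theory Submission
  imports Defs "HOL-Complex_Analysis.Cauchy_Integral_Theorem"
begin

section \<open>The circle measure is invariant under \<open>z \<mapsto> c z\<^sup>n\<close>\<close>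

lemma sets_circ [simp, measurable_cong]: "sets circ = sets borel"
  unfolding circ_def by simp

lemma space_circ [simp]: "space circ = UNIV"
  unfolding circ_def by simp

lemma measurable_circ_iff [simp]: "measurable circ N = measurable borel N"
  by (rule measurable_cong_sets) auto

lemma measurable_cis [measurable]: "cis \<in> borel_measurable borel"
  by (intro borel_measurable_continuous_onI continuous_intros)

lemma measurable_cnj [measurable]: "cnj \<in> borel_measurable borel"
  by (intro borel_measurable_continuous_onI continuous_intros)

lemma measurable_rotate [measurable]:
  "h \<in> borel_measurable borel \<Longrightarrow> (\<lambda>z. h (\<omega> * z)) \<in> borel_measurable borel"
  for \<omega> :: complex
  by (erule measurable_compose[rotated]) measurable

lemma nn_integral_periodic_translate:
  fixes G :: "real \<Rightarrow> ennreal" and p :: real and k :: int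
  assumes [measurable]: "G \<in> borel_measurable borel" and periodic: "\<And>x. G (x + p) = G x"
  shows "(\<integral>\<^sup>+x\<in>{u + of_int k * p..<v + of_int k * p}. G x \<partial>lborel) = (\<integral>\<^sup>+x\<in>{u..<v}. G x \<partial>lborel)"
proof -
  interpret periodic_fun_simple G p by unfold_locales (rule periodic)
  have "(\<integral>\<^sup>+x\<in>{u + of_int k * p..<v + of_int k * p}. G x \<partial>lborel)
      = (\<integral>\<^sup>+x. G (of_int k * p + x) * indicator {u + of_int k * p..<v + of_int k * p} (of_int k * p + x) \<partial>lborel)"
    using nn_integral_real_affine[of "\<lambda>x. G x * indicator {u + of_int k * p..<v + of_int k * p} x" 1 "of_int k * p"]
    by simp
  also have "\<dots> = (\<integral>\<^sup>+x\<in>{u..<v}. G x \<partial>lborel)"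
    using plus_of_int by (intro nn_integral_cong) (simp add: add.commute indicator_def)
  finally show ?thesis .
qed

lemma nn_integral_interval_split:
  fixes G :: "real \<Rightarrow> ennreal"
  assumes [measurable]: "G \<in> borel_measurable borel" and "u \<le> v" "v \<le> w"
  shows "(\<integral>\<^sup>+x\<in>{u..<w}. G x \<partial>lborel) = (\<integral>\<^sup>+x\<in>{u..<v}. G x \<partial>lborel) + (\<integral>\<^sup>+x\<in>{v..<w}. G x \<partial>lborel)"
  using nn_integral_disjoint_pair[of G lborel "{u..<v}" "{v..<w}"] assms by (simp add: ivl_disj_un)

lemma nn_integral_periodic_window:
  fixes G :: "real \<Rightarrow> ennreal"
  assumes [measurable]: "G \<in> borel_measurable borel" and periodic: "\<And>x. G (x + p) = G x" and "p > 0"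
  shows "(\<integral>\<^sup>+x\<in>{b..<b + p}. G x \<partial>lborel) = (\<integral>\<^sup>+x\<in>{0..<p}. G x \<partial>lborel)"
proof -
  define k where "k = \<lfloor>b / p\<rfloor>"
  define c where "c = b - of_int k * p"
  have "of_int k \<le> b / p" "b / p < of_int k + 1"
    unfolding k_def by linarith+
  with \<open>p > 0\<close> have c: "0 \<le> c" "c \<le> p"
    unfolding c_def by (auto simp: field_simps)
  note translate = nn_integral_periodic_translate[OF assms(1) periodic]
  have "(\<integral>\<^sup>+x\<in>{b..<b + p}. G x \<partial>lborel) = (\<integral>\<^sup>+x\<in>{c + of_int k * p..<(c + p) + of_int k * p}. G x \<partial>lborel)"
    by (simp add: c_def algebra_simps)
  also have "\<dots> = (\<integral>\<^sup>+x\<in>{c..<c + p}. G x \<partial>lborel)"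
    by (rule translate)
  also have "\<dots> = (\<integral>\<^sup>+x\<in>{c..<p}. G x \<partial>lborel) + (\<integral>\<^sup>+x\<in>{0 + of_int 1 * p..<c + of_int 1 * p}. G x \<partial>lborel)"
    using c nn_integral_interval_split[of G c p "c + p"] by simp
  also have "\<dots> = (\<integral>\<^sup>+x\<in>{c..<p}. G x \<partial>lborel) + (\<integral>\<^sup>+x\<in>{0..<c}. G x \<partial>lborel)"
    using translate[of 0 1 c] by simp
  also have "\<dots> = (\<integral>\<^sup>+x\<in>{0..<p}. G x \<partial>lborel)"
    using c nn_integral_interval_split[of G 0 c p] by (simp add: add.commute)
  finally show ?thesis .
qed

lemma nn_integral_periodic_multiple_window:
  fixes G :: "real \<Rightarrow> ennreal"
  assumes [measurable]: "G \<in> borel_measurable borel" and periodic: "\<And>x. G (x + p) = G x" and "p > 0"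
  shows "(\<integral>\<^sup>+x\<in>{a..<a + real n * p}. G x \<partial>lborel) = of_nat n * (\<integral>\<^sup>+x\<in>{0..<p}. G x \<partial>lborel)"
proof (induction n)
  case (Suc n)
  have "a + real (Suc n) * p = (a + real n * p) + p"
    by (simp add: algebra_simps)
  then have "(\<integral>\<^sup>+x\<in>{a..<a + real (Suc n) * p}. G x \<partial>lborel)
      = (\<integral>\<^sup>+x\<in>{a..<a + real n * p}. G x \<partial>lborel) + (\<integral>\<^sup>+x\<in>{a + real n * p..<a + real n * p + p}. G x \<partial>lborel)"
    using \<open>p > 0\<close> by (simp only:) (rule nn_integral_interval_split; simp)
  also have "\<dots> = of_nat n * (\<integral>\<^sup>+x\<in>{0..<p}. G x \<partial>lborel) + (\<integral>\<^sup>+x\<in>{0..<p}. G x \<partial>lborel)"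
    by (simp only: Suc.IH nn_integral_periodic_window[OF assms])
  finally show ?case
    by (simp add: distrib_right)
qed simp

lemma nn_integral_periodic_affine:
  fixes G :: "real \<Rightarrow> ennreal"
  assumes [measurable]: "G \<in> borel_measurable borel" and periodic: "\<And>x. G (x + p) = G x"
    and "p > 0" and "n \<ge> 1"
  shows "(\<integral>\<^sup>+t\<in>{0..<p}. G (a + real n * t) \<partial>lborel) = (\<integral>\<^sup>+t\<in>{0..<p}. G t \<partial>lborel)"
proof -
  have ind: "indicator {a..<a + real n * p} (a + real n * t) = (indicator {0..<p} t :: ennreal)" for t
    using \<open>n \<ge> 1\<close> by (simp add: indicator_def zero_le_mult_iff)
  have "ennreal (real n) * (\<integral>\<^sup>+t\<in>{0..<p}. G (a + real n * t) \<partial>lborel)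
      = (\<integral>\<^sup>+x\<in>{a..<a + real n * p}. G x \<partial>lborel)"
    using nn_integral_real_affine[of "\<lambda>x. G x * indicator {a..<a + real n * p} x" "real n" a] \<open>n \<ge> 1\<close>
    by (simp add: ind)
  also have "\<dots> = ennreal (real n) * (\<integral>\<^sup>+t\<in>{0..<p}. G t \<partial>lborel)"
    using nn_integral_periodic_multiple_window[OF assms(1-3)] by (simp add: ennreal_of_nat_eq_real_of_nat)
  finally show ?thesis
    using \<open>n \<ge> 1\<close> by (simp add: ennreal_mult_cancel_left)
qed

lemma nn_integral_circ:
  assumes [measurable]: "g \<in> borel_measurable borel"
  shows "(\<integral>\<^sup>+z. g z \<partial>circ) = (\<integral>\<^sup>+t\<in>{0..<2*pi}. g (cis t) \<partial>lborel) / ennreal (2*pi)"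
  unfolding circ_def by (simp add: nn_integral_distr nn_integral_uniform_measure measurable_cis)

lemma nn_integral_circ_monomial:
  assumes [measurable]: "g \<in> borel_measurable borel" and "cmod c = 1" "n \<ge> 1"
  shows "(\<integral>\<^sup>+z. g (c * z ^ n) \<partial>circ) = (\<integral>\<^sup>+z. g z \<partial>circ)"
proof -
  define a where "a = Arg c"
  have "c \<noteq> 0"
    using \<open>cmod c = 1\<close> by auto
  then have c: "c = cis a"
    using \<open>cmod c = 1\<close> by (simp add: a_def cis_Arg sgn_div_norm)
  have "c * cis t ^ n = cis (a + real n * t)" for t
    by (simp add: c Complex.DeMoivre cis_mult)
  moreover have "g (cis (x + 2*pi)) = g (cis x)" for x
    by (simp add: cis_mult[symmetric])
  ultimately show ?thesis
    using nn_integral_periodic_affine[of "\<lambda>t. g (cis t)" "2*pi" n a] \<open>n \<ge> 1\<close>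
    by (simp add: nn_integral_circ)
qed

lemma distr_circ_monomial:
  assumes "cmod c = 1" "n \<ge> 1"
  shows "distr circ borel (\<lambda>z. c * z ^ n) = circ"
proof (rule measure_eqI)
  fix A assume "A \<in> sets (distr circ borel (\<lambda>z. c * z ^ n))"
  then have A: "A \<in> sets borel" by simp
  have monomial: "(\<lambda>z. c * z ^ n) \<in> borel_measurable borel"
    by measurable
  have preimage: "(\<lambda>z. c * z ^ n) -` A \<in> sets circ"
    using measurable_sets_borel[OF monomial A] by simp
  have "emeasure (distr circ borel (\<lambda>z. c * z ^ n)) A = emeasure circ ((\<lambda>z. c * z ^ n) -` A)"
    using monomial A by (simp add: emeasure_distr)
  also have "\<dots> = (\<integral>\<^sup>+z. indicator A (c * z ^ n) \<partial>circ)"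
    unfolding nn_integral_indicator[OF preimage, symmetric] by (rule nn_integral_cong) (simp add: indicator_def)
  also have "\<dots> = emeasure circ A"
    using nn_integral_circ_monomial[of "indicator A" c n] assms A by simp
  finally show "emeasure (distr circ borel (\<lambda>z. c * z ^ n)) A = emeasure circ A" .
qed simp

lemma AE_circ_monomial:
  assumes "cmod c = 1" "n \<ge> 1" and [measurable]: "{w. P w} \<in> sets borel"
  shows "(AE w in circ. P w) \<longleftrightarrow> (AE z in circ. P (c * z ^ n))"
  by (subst distr_circ_monomial[OF assms(1,2), symmetric]) (simp add: AE_distr_iff)

lemma integral_circ_monomial:
  fixes g :: "complex \<Rightarrow> complex"
  assumes "cmod c = 1" "n \<ge> 1" and [measurable]: "g \<in> borel_measurable borel"
  shows "integral\<^sup>L circ (\<lambda>z. g (c * z ^ n)) = integral\<^sup>L circ g"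
  by (subst (2) distr_circ_monomial[OF assms(1,2), symmetric]) (simp add: integral_distr)

lemma finite_measure_circ: "finite_measure circ"
proof
  have "emeasure circ UNIV = (\<integral>\<^sup>+t\<in>{0..<2*pi}. 1 \<partial>lborel) / ennreal (2*pi)"
    using nn_integral_circ[of "\<lambda>_. 1"] by simp
  then show "emeasure circ (space circ) \<noteq> \<infinity>"
    by (simp add: divide_ennreal)
qed

lemma AE_circ_norm: "AE z in circ. cmod z = 1"
  unfolding circ_def by (subst AE_distr_iff) auto

lemma integrable_circ_bounded:
  fixes f :: "complex \<Rightarrow> complex"
  assumes "f \<in> borel_measurable borel" "AE z in circ. cmod (f z) \<le> C"
  shows "integrable circ f"
  using finite_measure.integrable_const_bound[OF finite_measure_circ, of f C] assms by simp

lemma unimodular_mult_cnj: "cmod z = 1 \<Longrightarrow> z * cnj z = 1"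
  using complex_norm_square[of z] by simp

lemma unimodular_cnj_mult: "cmod z = 1 \<Longrightarrow> cnj z * z = 1"
  using unimodular_mult_cnj[of z] by (simp add: mult.commute)

section \<open>Roots of unity\<close>

definition unit_roots :: "nat \<Rightarrow> complex set" where
  "unit_roots n = {\<omega>. \<omega> ^ n = 1}"

lemma finite_unit_roots: "n \<ge> 1 \<Longrightarrow> finite (unit_roots n)"
  unfolding unit_roots_def by (simp add: finite_roots_unity)

lemma card_unit_roots: "n \<ge> 1 \<Longrightarrow> card (unit_roots n) = n"
  unfolding unit_roots_def by (rule card_complex_roots_unity)

lemma norm_unit_root: "n \<ge> 1 \<Longrightarrow> \<omega> \<in> unit_roots n \<Longrightarrow> cmod \<omega> = 1"
  unfolding unit_roots_def using power_eq_1_iff[of \<omega> n] by auto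

lemma cnj_unit_root: "\<omega> \<in> unit_roots n \<Longrightarrow> cnj \<omega> \<in> unit_roots n"
  unfolding unit_roots_def by (metis complex_cnj_one complex_cnj_power mem_Collect_eq)

lemma cnj_power_unit_root:
  assumes "n \<ge> 1" "\<omega> \<in> unit_roots n" "i \<le> n"
  shows "cnj \<omega> ^ i = \<omega> ^ (n - i)"
proof -
  have "\<omega> ^ (n - i) = \<omega> ^ (n - i) * (\<omega> * cnj \<omega>) ^ i"
    using unimodular_mult_cnj[OF norm_unit_root[OF assms(1,2)]] by simp
  also have "\<dots> = \<omega> ^ (n - i + i) * cnj \<omega> ^ i"
    by (simp add: power_mult_distrib power_add mult.assoc)
  finally show ?thesis
    using assms(2,3) by (simp add: unit_roots_def)
qed

lemma sum_unit_roots_shift: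
  assumes "n \<ge> 1" "\<zeta> \<in> unit_roots n"
  shows "(\<Sum>\<omega>\<in>unit_roots n. f (\<omega> * \<zeta>)) = (\<Sum>\<omega>\<in>unit_roots n. f \<omega>)"
proof (rule sum.reindex_bij_betw)
  have \<zeta>: "\<zeta> * cnj \<zeta> = 1"
    by (rule unimodular_mult_cnj[OF norm_unit_root[OF assms]])
  show "bij_betw (\<lambda>\<omega>. \<omega> * \<zeta>) (unit_roots n) (unit_roots n)"
  proof (rule bij_betwI[where g = "\<lambda>\<omega>. \<omega> * cnj \<zeta>"])
    show "(\<lambda>\<omega>. \<omega> * \<zeta>) \<in> unit_roots n \<rightarrow> unit_roots n"
      using assms(2) by (auto simp: unit_roots_def power_mult_distrib)
    show "(\<lambda>\<omega>. \<omega> * cnj \<zeta>) \<in> unit_roots n \<rightarrow> unit_roots n"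
      using cnj_unit_root[OF assms(2)] by (auto simp: unit_roots_def power_mult_distrib)
  qed (use \<zeta> in \<open>simp_all add: mult.assoc mult.commute[of "cnj \<zeta>"]\<close>)
qed

lemma unit_root_power_ne_1:
  assumes "n \<ge> 1" "\<not> n dvd m"
  obtains \<zeta> where "\<zeta> \<in> unit_roots n" "\<zeta> ^ m \<noteq> 1"
proof
  define \<zeta> where "\<zeta> = exp (2 * of_real pi * \<i> * of_nat 1 / of_nat n)"
  have power: "\<zeta> ^ k = exp (2 * of_real pi * \<i> * of_nat k / of_nat n)" for k
    unfolding \<zeta>_def by (simp add: exp_of_nat_mult[symmetric] field_simps)
  show "\<zeta> \<in> unit_roots n"
    using power[of n] complex_root_unity_eq_1[OF assms(1), of n] by (simp add: unit_roots_def)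
  show "\<zeta> ^ m \<noteq> 1"
    using power[of m] complex_root_unity_eq_1[OF assms(1), of m] assms(2) by simp
qed

lemma sum_unit_roots_power:
  assumes "n \<ge> 1"
  shows "(\<Sum>\<omega>\<in>unit_roots n. \<omega> ^ m) = (if n dvd m then of_nat n else 0)"
proof (cases "n dvd m")
  case True
  then have "(\<Sum>\<omega>\<in>unit_roots n. \<omega> ^ m) = (\<Sum>\<omega>\<in>unit_roots n. 1)"
    by (intro sum.cong) (auto simp: unit_roots_def power_mult elim!: dvdE)
  then show ?thesis
    using True card_unit_roots[OF assms] by simp
next
  case False
  then obtain \<zeta> where \<zeta>: "\<zeta> \<in> unit_roots n" "\<zeta> ^ m \<noteq> 1"
    using unit_root_power_ne_1[OF assms] by blast
  define S where "S = (\<Sum>\<omega>\<in>unit_roots n. \<omega> ^ m)"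
  have "S = (\<Sum>\<omega>\<in>unit_roots n. (\<omega> * \<zeta>) ^ m)"
    unfolding S_def by (rule sum_unit_roots_shift[OF assms \<zeta>(1), symmetric])
  also have "\<dots> = \<zeta> ^ m * S"
    unfolding S_def by (simp add: power_mult_distrib sum_distrib_left mult.commute)
  finally have "(1 - \<zeta> ^ m) * S = 0"
    by (simp add: algebra_simps)
  with \<zeta>(2) False show ?thesis
    unfolding S_def by simp
qed

lemma dvd_add_diff_iff:
  fixes i j n :: nat
  assumes "i < n" "j < n"
  shows "n dvd j + (n - i) \<longleftrightarrow> i = j"
proof
  assume dvd: "n dvd j + (n - i)"
  show "i = j"
  proof (rule ccontr)
    assume "i \<noteq> j"
    then consider "i < j" | "j < i"
      by linarith
    then show False
    proof cases
      case 1
      then have "j + (n - i) = (j - i) + n"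
        using assms by simp
      with dvd have "n dvd j - i"
        by simp
      then show False
        using 1 assms dvd_imp_le[of n "j - i"] by simp
    next
      case 2
      then show False
        using assms dvd dvd_imp_le[of n "j + (n - i)"] by simp
    qed
  qed
qed (use assms in simp)

lemma sum_unit_roots_orthogonal:
  assumes "i < n" "j < n"
  shows "(\<Sum>\<omega>\<in>unit_roots n. \<omega> ^ j * cnj \<omega> ^ i) = (if i = j then of_nat n else 0)"
proof -
  have "\<omega> ^ j * cnj \<omega> ^ i = \<omega> ^ (j + (n - i))" if "\<omega> \<in> unit_roots n" for \<omega>
    using assms by (simp only: cnj_power_unit_root[of n \<omega> i] that power_add)
  then have "(\<Sum>\<omega>\<in>unit_roots n. \<omega> ^ j * cnj \<omega> ^ i) = (\<Sum>\<omega>\<in>unit_roots n. \<omega> ^ (j + (n - i)))"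
    by simp
  then show ?thesis
    using assms sum_unit_roots_power[of n "j + (n - i)"] dvd_add_diff_iff[OF assms] by simp
qed

lemma sum_cnj_powers_unit_root:
  assumes "\<omega> \<in> unit_roots n"
  shows "(\<Sum>j<n. cnj \<omega> ^ j) = (if \<omega> = 1 then of_nat n else 0)"
proof (cases "\<omega> = 1")
  case False
  then have "cnj \<omega> \<noteq> 1"
    by (metis complex_cnj_cnj complex_cnj_one)
  moreover have "cnj \<omega> ^ n = 1"
    using cnj_unit_root[OF assms] by (simp add: unit_roots_def)
  ultimately show ?thesis
    using False by (simp add: geometric_sum)
qed simp

section \<open>Bounded functions and the Hardy space \<open>H\<^sup>\<infinity>\<close>\<close>

lemma LinfI: "f \<in> borel_measurable borel \<Longrightarrow> AE z in circ. cmod (f z) \<le> C \<Longrightarrow> f \<in> Linf"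
  unfolding Linf_def by auto

lemma LinfE:
  assumes "f \<in> Linf"
  obtains C where "f \<in> borel_measurable borel" "AE z in circ. cmod (f z) \<le> C"
  using assms unfolding Linf_def by auto

lemma Linf_boundedI: "f \<in> borel_measurable borel \<Longrightarrow> (\<And>z. cmod (f z) \<le> C) \<Longrightarrow> f \<in> Linf"
  by (rule LinfI) auto

lemma Linf_measurable: "f \<in> Linf \<Longrightarrow> f \<in> borel_measurable borel"
  unfolding Linf_def by auto

lemma Linf_add:
  assumes "f \<in> Linf" "g \<in> Linf"
  shows "(\<lambda>z. f z + g z) \<in> Linf"
proof -
  obtain C D where [measurable]: "f \<in> borel_measurable borel" "g \<in> borel_measurable borel"
    and C: "AE z in circ. cmod (f z) \<le> C" and D: "AE z in circ. cmod (g z) \<le> D"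
    using assms by (metis LinfE)
  from C D have "AE z in circ. cmod (f z + g z) \<le> C + D"
    by eventually_elim (auto intro: order_trans[OF norm_triangle_ineq])
  then show ?thesis
    by (intro LinfI) auto
qed

lemma Linf_mult_bounded:
  assumes "f \<in> Linf" and [measurable]: "g \<in> borel_measurable borel" and "AE z in circ. cmod (g z) \<le> D"
  shows "(\<lambda>z. g z * f z) \<in> Linf"
proof -
  obtain C where [measurable]: "f \<in> borel_measurable borel" and C: "AE z in circ. cmod (f z) \<le> C"
    using assms(1) by (rule LinfE)
  from assms(3) C have "AE z in circ. cmod (g z * f z) \<le> D * C"
    by eventually_elim (auto simp: norm_mult intro: mult_mono order_trans[OF norm_ge_zero])
  then show ?thesis
    by (intro LinfI) auto
qed

lemma AE_circ_norm_power: "AE z in circ. cmod (z ^ k) = 1"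
  using AE_circ_norm by eventually_elim (simp add: norm_power)

lemma Linf_mult_power:
  assumes "f \<in> Linf"
  shows "(\<lambda>z. z ^ k * f z) \<in> Linf"
proof (rule Linf_mult_bounded[OF assms])
  show "AE z in circ. cmod (z ^ k) \<le> 1"
    using AE_circ_norm_power[of k] by eventually_elim simp
qed simp

lemma integrable_Linf_mult_power: "f \<in> Linf \<Longrightarrow> integrable circ (\<lambda>z. f z * z ^ k)"
  using Linf_mult_power[of f k] unfolding Linf_def
  by (auto simp: mult.commute intro: integrable_circ_bounded)

lemma Linf_compose_monomial:
  assumes "f \<in> Linf" "cmod c = 1" "n \<ge> 1"
  shows "(\<lambda>z. f (c * z ^ n)) \<in> Linf"
proof -
  obtain C where [measurable]: "f \<in> borel_measurable borel" and "AE z in circ. cmod (f z) \<le> C"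
    using assms(1) by (rule LinfE)
  then have "AE z in circ. cmod (f (c * z ^ n)) \<le> C"
    using AE_circ_monomial[OF assms(2,3), of "\<lambda>w. cmod (f w) \<le> C"] by simp
  then show ?thesis
    by (intro LinfI) auto
qed

lemma Hinf_Linf: "f \<in> Hinf \<Longrightarrow> f \<in> Linf"
  unfolding Hinf_def by auto

lemma Hinf_coeff: "f \<in> Hinf \<Longrightarrow> k \<ge> 1 \<Longrightarrow> integral\<^sup>L circ (\<lambda>z. f z * z ^ k) = 0"
  unfolding Hinf_def by auto

lemma HinfI: "f \<in> Linf \<Longrightarrow> (\<And>k. k \<ge> 1 \<Longrightarrow> integral\<^sup>L circ (\<lambda>z. f z * z ^ k) = 0) \<Longrightarrow> f \<in> Hinf"
  unfolding Hinf_def by auto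

lemma Hinf_measurable: "f \<in> Hinf \<Longrightarrow> f \<in> borel_measurable borel"
  by (simp add: Hinf_Linf Linf_measurable)

lemma Hinf_zero: "(\<lambda>z. 0) \<in> Hinf"
  by (intro HinfI LinfI[of _ 0]) auto

lemma Hinf_add:
  assumes "f \<in> Hinf" "g \<in> Hinf"
  shows "(\<lambda>z. f z + g z) \<in> Hinf"
proof (rule HinfI)
  show "(\<lambda>z. f z + g z) \<in> Linf"
    using assms by (simp add: Hinf_Linf Linf_add)
  fix k :: nat assume "k \<ge> 1"
  have "integral\<^sup>L circ (\<lambda>z. (f z + g z) * z ^ k)
      = integral\<^sup>L circ (\<lambda>z. f z * z ^ k) + integral\<^sup>L circ (\<lambda>z. g z * z ^ k)"
    unfolding distrib_right using assms
    by (intro Bochner_Integration.integral_add) (simp_all add: Hinf_Linf integrable_Linf_mult_power)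
  then show "integral\<^sup>L circ (\<lambda>z. (f z + g z) * z ^ k) = 0"
    using assms \<open>k \<ge> 1\<close> by (simp add: Hinf_coeff)
qed

lemma Hinf_cmult:
  assumes "f \<in> Hinf"
  shows "(\<lambda>z. c * f z) \<in> Hinf"
proof (rule HinfI)
  show "(\<lambda>z. c * f z) \<in> Linf"
    using Linf_mult_bounded[OF Hinf_Linf[OF assms], of "\<lambda>_. c" "cmod c"] by simp
qed (use assms in \<open>simp add: Hinf_coeff mult.assoc\<close>)

lemma Hinf_sum:
  "finite A \<Longrightarrow> (\<And>i. i \<in> A \<Longrightarrow> f i \<in> Hinf) \<Longrightarrow> (\<lambda>z. \<Sum>i\<in>A. f i z) \<in> Hinf"
  by (induction A rule: finite_induct) (simp_all add: Hinf_zero Hinf_add)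

lemma Hinf_mult_power:
  assumes "f \<in> Hinf"
  shows "(\<lambda>z. z ^ j * f z) \<in> Hinf"
proof (rule HinfI)
  show "(\<lambda>z. z ^ j * f z) \<in> Linf"
    using assms by (simp add: Hinf_Linf Linf_mult_power)
  fix k :: nat assume "k \<ge> 1"
  then show "integral\<^sup>L circ (\<lambda>z. z ^ j * f z * z ^ k) = 0"
    using Hinf_coeff[OF assms, of "j + k"] by (simp add: power_add ac_simps)
qed

lemma integral_circ_rotate_coeff:
  fixes F :: "complex \<Rightarrow> complex"
  assumes "cmod \<zeta> = 1" and [measurable]: "F \<in> borel_measurable borel"
  shows "integral\<^sup>L circ (\<lambda>z. F (\<zeta> * z) * z ^ k) = cnj \<zeta> ^ k * integral\<^sup>L circ (\<lambda>z. F z * z ^ k)"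
proof -
  have "integral\<^sup>L circ (\<lambda>z. F z * z ^ k) = integral\<^sup>L circ (\<lambda>z. F (\<zeta> * z) * (\<zeta> * z) ^ k)"
    using integral_circ_monomial[OF assms(1), of 1 "\<lambda>z. F z * z ^ k"] by simp
  also have "\<dots> = integral\<^sup>L circ (\<lambda>z. \<zeta> ^ k * (F (\<zeta> * z) * z ^ k))"
    by (simp add: power_mult_distrib ac_simps)
  also have "\<dots> = \<zeta> ^ k * integral\<^sup>L circ (\<lambda>z. F (\<zeta> * z) * z ^ k)"
    by (rule integral_mult_right_zero)
  finally show ?thesis
    using unimodular_cnj_mult[OF assms(1)] by (simp add: mult.assoc[symmetric] power_mult_distrib[symmetric])
qed

lemma Hinf_rotate:
  assumes "f \<in> Hinf" "cmod \<zeta> = 1"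
  shows "(\<lambda>z. f (\<zeta> * z)) \<in> Hinf"
proof (rule HinfI)
  show "(\<lambda>z. f (\<zeta> * z)) \<in> Linf"
    using Linf_compose_monomial[OF Hinf_Linf[OF assms(1)] assms(2), of 1] by simp
qed (simp add: integral_circ_rotate_coeff assms Hinf_measurable Hinf_coeff)

lemma Hinf_compose_power:
  assumes "\<phi> \<in> Hinf" "n \<ge> 1"
  shows "(\<lambda>z. \<phi> (z ^ n)) \<in> Hinf"
proof (rule HinfI)
  have [measurable]: "\<phi> \<in> borel_measurable borel"
    using assms(1) by (rule Hinf_measurable)
  show "(\<lambda>z. \<phi> (z ^ n)) \<in> Linf"
    using Linf_compose_monomial[OF Hinf_Linf[OF assms(1)] _ assms(2), of 1] by simp
  fix k :: nat assume "k \<ge> 1"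
  show "integral\<^sup>L circ (\<lambda>z. \<phi> (z ^ n) * z ^ k) = 0"
  proof (cases "n dvd k")
    case True
    then obtain l where l: "k = n * l" and "l \<ge> 1"
      using \<open>k \<ge> 1\<close> by (auto elim!: dvdE intro: Suc_leI)
    then have "integral\<^sup>L circ (\<lambda>z. \<phi> (z ^ n) * z ^ k) = integral\<^sup>L circ (\<lambda>z. \<phi> z * z ^ l)"
      using integral_circ_monomial[of 1 n "\<lambda>w. \<phi> w * w ^ l"] assms(2) by (simp add: power_mult)
    with \<open>l \<ge> 1\<close> show ?thesis
      using Hinf_coeff[OF assms(1)] by simp
  next
    case False
    \<comment> \<open>\<open>\<phi> (z\<^sup>n)\<close> is invariant under a rotation \<open>\<zeta>\<close> that multiplies its \<open>k\<close>-th
      coefficient by \<open>cnj \<zeta>\<^sup>k \<noteq> 1\<close>\<close>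
    then obtain \<zeta> where \<zeta>: "\<zeta> \<in> unit_roots n" "\<zeta> ^ k \<noteq> 1"
      using unit_root_power_ne_1[OF assms(2)] by blast
    then have "cnj \<zeta> ^ k \<noteq> 1"
      by (metis complex_cnj_cnj complex_cnj_one complex_cnj_power)
    moreover have "integral\<^sup>L circ (\<lambda>z. \<phi> (z ^ n) * z ^ k) = cnj \<zeta> ^ k * integral\<^sup>L circ (\<lambda>z. \<phi> (z ^ n) * z ^ k)"
      using integral_circ_rotate_coeff[OF norm_unit_root[OF assms(2) \<zeta>(1)], of "\<lambda>z. \<phi> (z ^ n)" k] \<zeta>(1)
      by (simp add: unit_roots_def power_mult_distrib)
    ultimately show ?thesis
      by (metis mult_cancel_right2)
  qed
qed

lemma Hinf_pow_measurable: "g \<in> Hinf_pow n \<Longrightarrow> g \<in> borel_measurable borel"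
  unfolding Hinf_pow_def using Hinf_measurable by auto

lemma Hinf_pow_rotate:
  "g \<in> Hinf_pow n \<Longrightarrow> \<zeta> \<in> unit_roots n \<Longrightarrow> g (\<zeta> * z) = g z"
  unfolding Hinf_pow_def unit_roots_def by (auto simp: power_mult_distrib)

lemma Hinf_pow_mult_power: "g \<in> Hinf_pow n \<Longrightarrow> n \<ge> 1 \<Longrightarrow> (\<lambda>z. z ^ j * g z) \<in> Hinf"
  unfolding Hinf_pow_def by (auto intro!: Hinf_mult_power Hinf_compose_power)

lemma Hinf_of_compose_power:
  assumes "n \<ge> 1" and [measurable]: "\<Phi> \<in> borel_measurable borel" and "\<psi> \<in> Linf"
    and compose: "AE z in circ. \<Phi> (z ^ n) = \<psi> z"
    and coeff: "\<And>k. k \<ge> 1 \<Longrightarrow> integral\<^sup>L circ (\<lambda>z. \<psi> z * z ^ (n * k)) = 0"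
  shows "\<Phi> \<in> Hinf"
proof (rule HinfI)
  obtain C where [measurable]: "\<psi> \<in> borel_measurable borel" and C: "AE z in circ. cmod (\<psi> z) \<le> C"
    using \<open>\<psi> \<in> Linf\<close> by (rule LinfE)
  from C compose have "AE z in circ. cmod (\<Phi> (z ^ n)) \<le> C"
    by eventually_elim simp
  then have "AE w in circ. cmod (\<Phi> w) \<le> C"
    using AE_circ_monomial[of 1 n "\<lambda>w. cmod (\<Phi> w) \<le> C"] \<open>n \<ge> 1\<close> by simp
  then show "\<Phi> \<in> Linf"
    by (intro LinfI) auto
  fix k :: nat assume "k \<ge> 1"
  have "integral\<^sup>L circ (\<lambda>w. \<Phi> w * w ^ k) = integral\<^sup>L circ (\<lambda>z. \<Phi> (z ^ n) * z ^ (n * k))"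
    using integral_circ_monomial[of 1 n "\<lambda>w. \<Phi> w * w ^ k"] \<open>n \<ge> 1\<close> by (simp add: power_mult)
  also have "\<dots> = integral\<^sup>L circ (\<lambda>z. \<psi> z * z ^ (n * k))"
    using compose by (intro integral_cong_AE) auto
  finally show "integral\<^sup>L circ (\<lambda>w. \<Phi> w * w ^ k) = 0"
    using coeff[OF \<open>k \<ge> 1\<close>] by simp
qed

section \<open>Splitting a function by the residue of its frequencies modulo \<open>n\<close>\<close>

definition freq_component :: "nat \<Rightarrow> nat \<Rightarrow> (complex \<Rightarrow> complex) \<Rightarrow> complex \<Rightarrow> complex" where
  "freq_component n j h z = (\<Sum>\<omega>\<in>unit_roots n. cnj \<omega> ^ j * h (\<omega> * z)) / of_nat n"

lemma measurable_freq_component [measurable]: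
  assumes [measurable]: "h \<in> borel_measurable borel"
  shows "freq_component n j h \<in> borel_measurable borel"
  unfolding freq_component_def[abs_def] by measurable

lemma freq_component_rotate:
  assumes "n \<ge> 1" "\<zeta> \<in> unit_roots n"
  shows "freq_component n j h (\<zeta> * z) = \<zeta> ^ j * freq_component n j h z"
proof -
  have \<zeta>: "\<zeta> * cnj \<zeta> = 1"
    by (rule unimodular_mult_cnj[OF norm_unit_root[OF assms]])
  define f where "f \<omega> = (\<zeta> * cnj \<omega>) ^ j * h (\<omega> * z)" for \<omega>
  have cancel: "\<zeta> * cnj (\<omega> * \<zeta>) = cnj \<omega>" for \<omega>
    by (metis \<zeta> complex_cnj_mult mult.left_commute mult_1_right)
  have "f (\<omega> * \<zeta>) = cnj \<omega> ^ j * h (\<omega> * (\<zeta> * z))" for \<omega>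
    by (simp only: f_def cancel mult.assoc)
  then have "(\<Sum>\<omega>\<in>unit_roots n. cnj \<omega> ^ j * h (\<omega> * (\<zeta> * z))) = (\<Sum>\<omega>\<in>unit_roots n. f (\<omega> * \<zeta>))"
    by simp
  also have "\<dots> = (\<Sum>\<omega>\<in>unit_roots n. f \<omega>)"
    by (rule sum_unit_roots_shift[OF assms])
  also have "\<dots> = \<zeta> ^ j * (\<Sum>\<omega>\<in>unit_roots n. cnj \<omega> ^ j * h (\<omega> * z))"
    by (simp add: f_def sum_distrib_left power_mult_distrib ac_simps)
  finally show ?thesis
    unfolding freq_component_def by simp
qed

lemma sum_freq_components:
  assumes "n \<ge> 1"
  shows "(\<Sum>j<n. freq_component n j h z) = h z"
proof -
  have "(\<Sum>j<n. freq_component n j h z) = (\<Sum>\<omega>\<in>unit_roots n. (\<Sum>j<n. cnj \<omega> ^ j) * h (\<omega> * z)) / of_nat n"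
    unfolding freq_component_def
    by (simp add: sum_divide_distrib[symmetric] sum_distrib_right sum.swap[of _ "unit_roots n"])
  also have "\<dots> = (\<Sum>\<omega>\<in>unit_roots n. if \<omega> = 1 then of_nat n * h z else 0) / of_nat n"
    by (intro arg_cong[where f = "\<lambda>x. x / of_nat n"] sum.cong) (auto simp: sum_cnj_powers_unit_root)
  also have "\<dots> = h z"
    using assms finite_unit_roots[OF assms] by (simp add: unit_roots_def)
  finally show ?thesis .
qed

lemma freq_component_diff:
  "freq_component n j (\<lambda>z. f z - g z) z = freq_component n j f z - freq_component n j g z"
  unfolding freq_component_def by (simp add: right_diff_distrib sum_subtractf diff_divide_distrib)

lemma Hinf_freq_component:
  assumes "h \<in> Hinf" "n \<ge> 1"
  shows "freq_component n j h \<in> Hinf"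
proof -
  have "freq_component n j h = (\<lambda>z. \<Sum>\<omega>\<in>unit_roots n. (cnj \<omega> ^ j / of_nat n) * h (\<omega> * z))"
    unfolding freq_component_def by (simp add: fun_eq_iff sum_divide_distrib)
  also have "\<dots> \<in> Hinf"
    using assms by (intro Hinf_sum Hinf_cmult Hinf_rotate finite_unit_roots norm_unit_root)
  finally show ?thesis .
qed

lemma freq_component_invariant_sum:
  assumes "i < n" and invariant: "\<forall>\<omega>\<in>unit_roots n. \<forall>j<n. g j (\<omega> * z) = g j z"
  shows "freq_component n i (\<lambda>z. \<Sum>j<n. z ^ j * g j z) z = z ^ i * g i z"
proof -
  have "(\<Sum>\<omega>\<in>unit_roots n. cnj \<omega> ^ i * (\<Sum>j<n. (\<omega> * z) ^ j * g j (\<omega> * z)))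
      = (\<Sum>j<n. (\<Sum>\<omega>\<in>unit_roots n. \<omega> ^ j * cnj \<omega> ^ i) * (z ^ j * g j z))"
    using invariant
    by (simp add: sum_distrib_left sum_distrib_right sum.swap[of _ "unit_roots n"] power_mult_distrib ac_simps)
  also have "\<dots> = (\<Sum>j<n. if i = j then of_nat n * (z ^ i * g i z) else 0)"
    using \<open>i < n\<close> by (intro sum.cong) (auto simp: sum_unit_roots_orthogonal)
  also have "\<dots> = of_nat n * (z ^ i * g i z)"
    using \<open>i < n\<close> by simp
  finally show ?thesis
    unfolding freq_component_def using \<open>i < n\<close> by simp
qed

text \<open>On the circle \<open>cnj z = 1 / z\<close>, so this is \<open>z\<^sup>-\<^sup>j\<close> times the frequency component; it
  depends only on \<open>z\<^sup>n\<close>.\<close>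

definition pow_component :: "nat \<Rightarrow> nat \<Rightarrow> (complex \<Rightarrow> complex) \<Rightarrow> complex \<Rightarrow> complex" where
  "pow_component n j h z = cnj z ^ j * freq_component n j h z"

lemma measurable_pow_component [measurable]:
  "h \<in> borel_measurable borel \<Longrightarrow> pow_component n j h \<in> borel_measurable borel"
  unfolding pow_component_def[abs_def] by measurable

lemma pow_component_rotate:
  assumes "n \<ge> 1" "\<zeta> \<in> unit_roots n"
  shows "pow_component n j h (\<zeta> * z) = pow_component n j h z"
  using unimodular_cnj_mult[OF norm_unit_root[OF assms]]
  by (simp add: pow_component_def freq_component_rotate[OF assms] power_mult_distrib ac_simps)
    (metis mult.assoc mult_1 power_mult_distrib power_one)

definition pow_factor :: "nat \<Rightarrow> (complex \<Rightarrow> 'a) \<Rightarrow> complex \<Rightarrow> 'a" where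
  "pow_factor n F w = F (exp (Ln w / of_nat n))"

lemma measurable_pow_factor [measurable]:
  "F \<in> borel_measurable borel \<Longrightarrow> pow_factor n F \<in> borel_measurable borel"
  unfolding pow_factor_def[abs_def] by (erule measurable_compose[rotated]) measurable

lemma pow_factor_eq:
  assumes "n \<ge> 1" "z \<noteq> 0" and invariant: "\<And>\<zeta>. \<zeta> \<in> unit_roots n \<Longrightarrow> F (\<zeta> * z) = F z"
  shows "pow_factor n F (z ^ n) = F z"
proof -
  define r where "r = exp (Ln (z ^ n) / of_nat n)"
  have "r ^ n = z ^ n"
    using assms(1,2) by (simp add: r_def exp_of_nat_mult[symmetric])
  then have "r / z \<in> unit_roots n"
    using assms(2) by (simp add: unit_roots_def power_divide)
  moreover have "r = (r / z) * z"
    using assms(2) by simp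
  ultimately show ?thesis
    unfolding pow_factor_def r_def[symmetric] by (metis invariant)
qed

lemma pow_factor_pow_component:
  assumes "n \<ge> 1" "z \<noteq> 0"
  shows "pow_factor n (pow_component n j h) (z ^ n) = pow_component n j h z"
  using assms(2) by (rule pow_factor_eq[OF assms(1)]) (rule pow_component_rotate[OF assms(1)])

lemma pow_component_mult_power:
  assumes "cmod z = 1" "j \<le> m"
  shows "pow_component n j h z * z ^ m = freq_component n j h z * z ^ (m - j)"
proof -
  have "pow_component n j h z * z ^ m = (cnj z * z) ^ j * freq_component n j h z * z ^ (m - j)"
    unfolding pow_component_def using assms(2)
    by (simp add: power_add[symmetric] power_mult_distrib ac_simps)
  then show ?thesis
    using unimodular_cnj_mult[OF assms(1)] by simp
qed

lemma Hinf_pow_factor_pow_component: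
  assumes "h \<in> Hinf" "n \<ge> 1" "j < n"
  shows "pow_factor n (pow_component n j h) \<in> Hinf"
proof (rule Hinf_of_compose_power[OF \<open>n \<ge> 1\<close>])
  have [measurable]: "h \<in> borel_measurable borel"
    using assms(1) by (rule Hinf_measurable)
  show "pow_factor n (pow_component n j h) \<in> borel_measurable borel"
    by measurable
  have "AE z in circ. cmod (cnj z ^ j) \<le> 1"
    using AE_circ_norm by eventually_elim (simp add: norm_power)
  then show "pow_component n j h \<in> Linf"
    unfolding pow_component_def
    by (intro Linf_mult_bounded Hinf_Linf Hinf_freq_component assms) auto
  show "AE z in circ. pow_factor n (pow_component n j h) (z ^ n) = pow_component n j h z"
    using AE_circ_norm by eventually_elim (auto intro: pow_factor_pow_component[OF assms(2)])
  fix k :: nat assume "k \<ge> 1"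
  then have "n \<le> n * k"
    by simp
  with assms(3) have "j \<le> n * k" "n * k - j \<ge> 1"
    by arith+
  then have "integral\<^sup>L circ (\<lambda>z. pow_component n j h z * z ^ (n * k))
      = integral\<^sup>L circ (\<lambda>z. freq_component n j h z * z ^ (n * k - j))"
    using AE_circ_norm by (intro integral_cong_AE) (auto elim!: eventually_mono simp: pow_component_mult_power)
  also have "\<dots> = 0"
    using Hinf_coeff[OF Hinf_freq_component[OF assms(1,2)] \<open>n * k - j \<ge> 1\<close>] .
  finally show "integral\<^sup>L circ (\<lambda>z. pow_component n j h z * z ^ (n * k)) = 0" .
qed

lemma sum_pow_components:
  assumes "cmod z = 1" "n \<ge> 1"
  shows "(\<Sum>j<n. z ^ j * pow_component n j f z) = f z"
  using sum_freq_components[OF assms(2), of f z] unimodular_mult_cnj[OF assms(1)]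
  by (simp add: pow_component_def mult.assoc[symmetric] power_mult_distrib[symmetric])

section \<open>Rotationally symmetric norms and their extension\<close>

lemma unimodular_real_part_split:
  fixes u v :: "complex \<Rightarrow> real"
  assumes [measurable]: "u \<in> borel_measurable borel" "v \<in> borel_measurable borel"
    and "\<And>z. 0 \<le> u z" "\<And>z. u z \<le> v z"
  obtains e where "e \<in> borel_measurable borel" "\<And>z. cmod (e z) = 1" "\<And>z. u z = v z * Re (e z)"
proof
  define h where "h z = (if v z = 0 then 0 else u z / v z)" for z
  have [measurable]: "h \<in> borel_measurable borel"
    unfolding h_def by measurable
  have h: "0 \<le> h z" "h z \<le> 1" for z
    using assms(3,4)[of z] by (auto simp: h_def field_simps)
  define e where "e z = complex_of_real (h z) + \<i> * complex_of_real (sqrt (1 - (h z)\<^sup>2))" for z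
  show "e \<in> borel_measurable borel"
    unfolding e_def by measurable
  show "cmod (e z) = 1" for z
    using h[of z] by (simp add: e_def cmod_def power_le_one)
  show "u z = v z * Re (e z)" for z
    using assms(3,4)[of z] by (auto simp: e_def h_def)
qed

lemma floor_div_bounds:
  fixes x m :: real
  assumes "0 \<le> x" "m > 0"
  shows "0 \<le> \<lfloor>m * x\<rfloor> / m" "\<lfloor>m * x\<rfloor> / m \<le> x" "x - \<lfloor>m * x\<rfloor> / m \<le> 1 / m"
proof -
  have floor: "of_int \<lfloor>m * x\<rfloor> \<le> m * x" "m * x - of_int \<lfloor>m * x\<rfloor> \<le> 1"
    by linarith+
  then show "0 \<le> \<lfloor>m * x\<rfloor> / m" "\<lfloor>m * x\<rfloor> / m \<le> x"
    using assms by (simp_all add: field_simps)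
  have "x - \<lfloor>m * x\<rfloor> / m = (m * x - of_int \<lfloor>m * x\<rfloor>) / m"
    using assms(2) by (simp add: field_simps)
  also have "\<dots> \<le> 1 / m"
    using floor(2) assms(2) by (intro divide_right_mono) auto
  finally show "x - \<lfloor>m * x\<rfloor> / m \<le> 1 / m" .
qed

lemma simple_function_floor:
  fixes t :: "'a \<Rightarrow> real"
  assumes "t \<in> borel_measurable M" "\<And>x. 0 \<le> t x" "\<And>x. t x \<le> B" "m > 0"
  shows "simple_function M (\<lambda>x. \<lfloor>m * t x\<rfloor> / m)"
proof (rule simple_function_borel_measurable)
  have "(\<lambda>x. \<lfloor>m * t x\<rfloor> / m) ` space M \<subseteq> (\<lambda>i. of_int i / m) ` {0..\<lceil>m * B\<rceil>}"
  proof (intro image_subsetI imageI)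
    fix x
    have "m * t x \<le> m * B"
      using assms(3,4) by simp
    then have "\<lfloor>m * t x\<rfloor> \<le> \<lfloor>m * B\<rfloor>"
      by (rule floor_mono)
    then have "\<lfloor>m * t x\<rfloor> \<le> \<lceil>m * B\<rceil>"
      using floor_le_ceiling[of "m * B"] by (rule order_trans)
    then show "\<lfloor>m * t x\<rfloor> \<in> {0..\<lceil>m * B\<rceil>}"
      using assms(2,4) by simp
  qed
  then show "finite ((\<lambda>x. \<lfloor>m * t x\<rfloor> / m) ` space M)"
    by (rule finite_subset) simp
qed (use assms(1) in measurable)

text \<open>\<open>alpha_ext\<close> is a supremum over simple minorants of \<open>|F|\<close>; bounded measurable minorants
  give the same supremum and, unlike simple functions, survive the rescalings used below.\<close>

definition bdd_minorants :: "(complex \<Rightarrow> complex) \<Rightarrow> (complex \<Rightarrow> real) set" where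
  "bdd_minorants F =
     {t \<in> borel_measurable borel. (\<exists>B. \<forall>z. t z \<le> B) \<and> (\<forall>z. 0 \<le> t z \<and> t z \<le> cmod (F z))}"

lemma Linf_bdd_minorant:
  assumes "t \<in> bdd_minorants F"
  shows "(\<lambda>z. complex_of_real (t z)) \<in> Linf"
proof -
  obtain B where "t \<in> borel_measurable borel" "\<And>z. t z \<le> B" "\<And>z. 0 \<le> t z"
    using assms unfolding bdd_minorants_def by auto
  then show ?thesis
    by (intro Linf_boundedI[of _ B]) auto
qed

lemma bdd_minorant_split:
  assumes "t \<in> bdd_minorants (\<lambda>z. F z + G z)"
    and [measurable]: "F \<in> borel_measurable borel" "G \<in> borel_measurable borel"
  obtains t1 t2 where "t1 \<in> bdd_minorants F" "t2 \<in> bdd_minorants G" "\<And>z. t z = t1 z + t2 z"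
proof
  obtain B where [measurable]: "t \<in> borel_measurable borel"
    and B: "\<And>z. t z \<le> B" and t: "\<And>z. 0 \<le> t z" "\<And>z. t z \<le> cmod (F z + G z)"
    using assms(1) unfolding bdd_minorants_def by auto
  define d where "d z = cmod (F z) + cmod (G z)" for z
  have td: "t z \<le> d z" for z
    using t(2)[of z] norm_triangle_ineq[of "F z" "G z"] unfolding d_def by linarith
  define t1 where "t1 z = t z * cmod (F z) / d z" for z
  define t2 where "t2 z = t z * cmod (G z) / d z" for z
  have bounds: "0 \<le> t1 z" "t1 z \<le> cmod (F z)" "t1 z \<le> t z"
    "0 \<le> t2 z" "t2 z \<le> cmod (G z)" "t2 z \<le> t z" for z
  proof -
    have "cmod (F z) \<le> d z" "cmod (G z) \<le> d z"
      by (simp_all add: d_def)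
    then have "t z * cmod (F z) \<le> d z * t z" "t z * cmod (G z) \<le> d z * t z"
      using t(1)[of z] by (simp_all add: mult_left_mono mult.commute[of "d z"])
    with \<open>cmod (F z) \<le> d z\<close> \<open>cmod (G z) \<le> d z\<close>
    show "0 \<le> t1 z" "t1 z \<le> cmod (F z)" "t1 z \<le> t z"
      and "0 \<le> t2 z" "t2 z \<le> cmod (G z)" "t2 z \<le> t z"
      using t(1)[of z] td[of z] unfolding t1_def t2_def
      by (auto simp: divide_le_eq mult.commute mult_left_mono mult_right_mono)
  qed
  show "t z = t1 z + t2 z" for z
    using td[of z] t(1)[of z] by (auto simp: t1_def t2_def d_def add_divide_distrib[symmetric] distrib_left[symmetric])
  have [measurable]: "t1 \<in> borel_measurable borel" "t2 \<in> borel_measurable borel"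
    unfolding t1_def t2_def d_def by measurable
  have "t1 z \<le> B" "t2 z \<le> B" for z
    using bounds(3,6)[of z] B[of z] by linarith+
  then show "t1 \<in> bdd_minorants F" "t2 \<in> bdd_minorants G"
    unfolding bdd_minorants_def using bounds by auto
qed

lemma tendsto_zero_ereal_sum_bound:
  fixes x :: "nat \<Rightarrow> ereal" and y :: "'i \<Rightarrow> nat \<Rightarrow> ereal"
  assumes "finite I" "\<And>k. 0 \<le> x k" "\<And>k. x k \<le> (\<Sum>i\<in>I. y i k)" "\<And>i. i \<in> I \<Longrightarrow> y i \<longlonglongrightarrow> 0"
  shows "x \<longlonglongrightarrow> 0"
proof (rule tendsto_sandwich[OF _ _ tendsto_const])
  have "(\<lambda>k. \<Sum>i\<in>I. y i k) \<longlonglongrightarrow> (\<Sum>i\<in>I. 0)"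
    using assms(4) by (intro tendsto_sum_ereal) auto
  then show "(\<lambda>k. \<Sum>i\<in>I. y i k) \<longlonglongrightarrow> 0"
    by simp
qed (use assms(2,3) in auto)

locale rot_sym =
  fixes \<alpha> :: "(complex \<Rightarrow> complex) \<Rightarrow> real"
  assumes rot_sym_norm: "rot_sym_norm \<alpha>"
begin

lemma norm_AE_cong: "f \<in> Linf \<Longrightarrow> g \<in> Linf \<Longrightarrow> (AE z in circ. f z = g z) \<Longrightarrow> \<alpha> f = \<alpha> g"
  using rot_sym_norm unfolding rot_sym_norm_def Linf_norm_def by blast

lemma norm_nonneg: "f \<in> Linf \<Longrightarrow> 0 \<le> \<alpha> f"
  using rot_sym_norm unfolding rot_sym_norm_def Linf_norm_def by blast

lemma norm_eq_0_AE: "f \<in> Linf \<Longrightarrow> \<alpha> f = 0 \<Longrightarrow> AE z in circ. f z = 0"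
  using rot_sym_norm unfolding rot_sym_norm_def Linf_norm_def by blast

lemma norm_cmult: "f \<in> Linf \<Longrightarrow> \<alpha> (\<lambda>z. c * f z) = cmod c * \<alpha> f"
  using rot_sym_norm unfolding rot_sym_norm_def Linf_norm_def by blast

lemma norm_triangle: "f \<in> Linf \<Longrightarrow> g \<in> Linf \<Longrightarrow> \<alpha> (\<lambda>z. f z + g z) \<le> \<alpha> f + \<alpha> g"
  using rot_sym_norm unfolding rot_sym_norm_def Linf_norm_def by blast

lemma norm_abs: "f \<in> Linf \<Longrightarrow> \<alpha> (\<lambda>z. complex_of_real (cmod (f z))) = \<alpha> f"
  using rot_sym_norm unfolding rot_sym_norm_def by blast

lemma norm_rot: "f \<in> Linf \<Longrightarrow> cmod w = 1 \<Longrightarrow> \<alpha> (rot w f) = \<alpha> f"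
  using rot_sym_norm unfolding rot_sym_norm_def by blast

lemma norm_const: "\<alpha> (\<lambda>z. c) = cmod c"
  using norm_cmult[OF Linf_boundedI[of "\<lambda>_. 1" 1], of c] rot_sym_norm
  by (simp add: rot_sym_norm_def)

text \<open>Writing \<open>u = v Re e\<close> with \<open>|e| = 1\<close>, the functions \<open>v e\<close> and \<open>v e\<^sup>*\<close>
  have the same norm as \<open>v\<close>, and \<open>u\<close> is their average.\<close>

lemma norm_of_real_mono:
  fixes u v :: "complex \<Rightarrow> real"
  assumes [measurable]: "u \<in> borel_measurable borel" "v \<in> borel_measurable borel"
    and "\<And>z. v z \<le> B" "\<And>z. 0 \<le> u z" "\<And>z. u z \<le> v z"
  shows "\<alpha> (\<lambda>z. complex_of_real (u z)) \<le> \<alpha> (\<lambda>z. complex_of_real (v z))"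
proof -
  obtain e where [measurable]: "e \<in> borel_measurable borel"
    and e: "\<And>z. cmod (e z) = 1" and u: "\<And>z. u z = v z * Re (e z)"
    using unimodular_real_part_split[of u v] assms(4,5) by auto
  have v: "0 \<le> v z" "\<bar>v z\<bar> \<le> B" for z
    using assms(3-5)[of z] by linarith+
  define f1 where "f1 z = complex_of_real (v z) * e z" for z
  define f2 where "f2 z = complex_of_real (v z) * cnj (e z)" for z
  have f1_measurable: "f1 \<in> borel_measurable borel"
    unfolding f1_def by measurable
  have f2_measurable: "f2 \<in> borel_measurable borel"
    unfolding f2_def by measurable
  have norms: "cmod (f1 z) = v z" "cmod (f2 z) = v z" for z
    using e v by (simp_all add: f1_def f2_def norm_mult)
  have Linf: "f1 \<in> Linf" "f2 \<in> Linf"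
    by (rule Linf_boundedI[OF f1_measurable, of B], simp add: norms assms(3))
      (rule Linf_boundedI[OF f2_measurable, of B], simp add: norms assms(3))
  have "(\<lambda>z. complex_of_real (u z)) = (\<lambda>z. (1/2) * (f1 z + f2 z))"
    by (simp add: fun_eq_iff u f1_def f2_def complex_eq_iff)
  then have "\<alpha> (\<lambda>z. complex_of_real (u z)) = cmod (1/2) * \<alpha> (\<lambda>z. f1 z + f2 z)"
    by (simp only: norm_cmult[OF Linf_add[OF Linf]])
  also have "\<dots> \<le> (1/2) * (\<alpha> f1 + \<alpha> f2)"
    using norm_triangle[OF Linf] by simp
  also have "\<dots> = \<alpha> (\<lambda>z. complex_of_real (v z))"
    using norm_abs[OF Linf(1)] norm_abs[OF Linf(2)] by (simp add: norms)
  finally show ?thesis .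
qed

lemma norm_of_real_le_const:
  fixes u :: "complex \<Rightarrow> real"
  assumes "u \<in> borel_measurable borel" "\<And>z. 0 \<le> u z" "\<And>z. u z \<le> c"
  shows "\<alpha> (\<lambda>z. complex_of_real (u z)) \<le> c"
  using norm_of_real_mono[of u "\<lambda>_. c" c] assms norm_const[of "of_real c"] order_trans[OF assms(2,3)]
  by simp

lemma norm_le_alpha_ext:
  assumes t: "t \<in> bdd_minorants F"
  shows "ereal (\<alpha> (\<lambda>z. complex_of_real (t z))) \<le> alpha_ext \<alpha> F"
proof (rule ereal_le_epsilon2)
  obtain B where [measurable]: "t \<in> borel_measurable borel"
    and B: "\<And>z. t z \<le> B" and t0: "\<And>z. 0 \<le> t z" and tF: "\<And>z. t z \<le> cmod (F z)"
    using t unfolding bdd_minorants_def by auto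
  fix \<epsilon> :: real assume "0 < \<epsilon>"
  then obtain m :: nat where m: "inverse (real (Suc m)) < \<epsilon>"
    using reals_Archimedean by blast
  define s where "s z = \<lfloor>real (Suc m) * t z\<rfloor> / real (Suc m)" for z
  have [measurable]: "s \<in> borel_measurable borel"
    unfolding s_def by measurable
  have s: "0 \<le> s z" "s z \<le> t z" "t z - s z \<le> inverse (real (Suc m))" for z
    using floor_div_bounds[OF t0[of z], of "real (Suc m)"] by (simp_all add: s_def inverse_eq_divide)
  have "simple_function circ s"
    unfolding s_def by (rule simple_function_floor[of _ _ B]) (use t0 B in auto)
  moreover have "s z \<le> cmod (F z)" for z
    using s(2)[of z] tF[of z] by linarith
  ultimately have "ereal (\<alpha> (\<lambda>z. complex_of_real (s z))) \<le> alpha_ext \<alpha> F"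
    unfolding alpha_ext_def using s(1) by (intro SUP_upper) simp
  have "\<alpha> (\<lambda>z. complex_of_real (t z)) \<le> \<alpha> (\<lambda>z. complex_of_real (s z)) + \<epsilon>"
  proof -
    have bounds: "cmod (complex_of_real (s z)) \<le> B"
      "cmod (complex_of_real (t z - s z)) \<le> inverse (real (Suc m))" for z
      using s[of z] B[of z] unfolding norm_of_real by linarith+
    have "(\<lambda>z. complex_of_real (s z)) \<in> Linf" "(\<lambda>z. complex_of_real (t z - s z)) \<in> Linf"
      by (rule Linf_boundedI, measurable, rule bounds)+
    from norm_triangle[OF this]
    have "\<alpha> (\<lambda>z. complex_of_real (t z))
        \<le> \<alpha> (\<lambda>z. complex_of_real (s z)) + \<alpha> (\<lambda>z. complex_of_real (t z - s z))"
      by (simp only: of_real_add[symmetric] add_diff_eq add_diff_cancel_left')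
    also have "\<alpha> (\<lambda>z. complex_of_real (t z - s z)) \<le> inverse (real (Suc m))"
      using s by (intro norm_of_real_le_const) auto
    finally show ?thesis
      using m by simp
  qed
  then have "ereal (\<alpha> (\<lambda>z. complex_of_real (t z))) \<le> ereal (\<alpha> (\<lambda>z. complex_of_real (s z))) + ereal \<epsilon>"
    by simp
  also have "\<dots> \<le> alpha_ext \<alpha> F + ereal \<epsilon>"
    using \<open>ereal (\<alpha> (\<lambda>z. complex_of_real (s z))) \<le> alpha_ext \<alpha> F\<close> by (rule add_right_mono)
  finally show "ereal (\<alpha> (\<lambda>z. complex_of_real (t z))) \<le> alpha_ext \<alpha> F + ereal \<epsilon>" .
qed

lemma alpha_ext_eq_SUP_bdd_minorants:
  "alpha_ext \<alpha> F = (SUP t\<in>bdd_minorants F. ereal (\<alpha> (\<lambda>z. complex_of_real (t z))))"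
proof (rule antisym)
  show "alpha_ext \<alpha> F \<le> (SUP t\<in>bdd_minorants F. ereal (\<alpha> (\<lambda>z. complex_of_real (t z))))"
    unfolding alpha_ext_def
  proof (rule SUP_subset_mono)
    show "{s. simple_function circ s \<and> (\<forall>z. 0 \<le> s z \<and> s z \<le> cmod (F z))} \<subseteq> bdd_minorants F"
    proof safe
      fix s assume s: "simple_function circ s" "\<forall>z. 0 \<le> s z \<and> s z \<le> cmod (F z)"
      then have "finite (range s)"
        using simple_functionD(1) by fastforce
      then show "s \<in> bdd_minorants F"
        using s borel_measurable_simple_function[OF s(1)]
        unfolding bdd_minorants_def by (auto intro!: exI[of _ "Max (range s)"])
    qed
  qed simp
qed (intro SUP_least norm_le_alpha_ext)

lemma alpha_ext_nonneg: "0 \<le> alpha_ext \<alpha> F"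
proof -
  have "(\<lambda>_. 0) \<in> bdd_minorants F"
    unfolding bdd_minorants_def by auto
  from norm_le_alpha_ext[OF this] show ?thesis
    by (simp add: norm_const zero_ereal_def)
qed

lemma alpha_ext_mono: "(\<And>z. cmod (F z) \<le> cmod (G z)) \<Longrightarrow> alpha_ext \<alpha> F \<le> alpha_ext \<alpha> G"
  unfolding alpha_ext_eq_SUP_bdd_minorants bdd_minorants_def
  by (rule SUP_subset_mono) (auto intro: order_trans)

lemma alpha_ext_mono_AE:
  assumes [measurable]: "F \<in> borel_measurable borel" "G \<in> borel_measurable borel"
    and "AE z in circ. cmod (F z) \<le> cmod (G z)"
  shows "alpha_ext \<alpha> F \<le> alpha_ext \<alpha> G"
  unfolding alpha_ext_eq_SUP_bdd_minorants[of F]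
proof (rule SUP_least)
  fix t assume t: "t \<in> bdd_minorants F"
  then obtain B where [measurable]: "t \<in> borel_measurable borel"
    and B: "\<And>z. t z \<le> B" and t0: "\<And>z. 0 \<le> t z" and tF: "\<And>z. t z \<le> cmod (F z)"
    unfolding bdd_minorants_def by auto
  define S where "S = {z. cmod (F z) \<le> cmod (G z)}"
  have [measurable]: "S \<in> sets borel"
    unfolding S_def by measurable
  define t' where "t' z = t z * indicator S z" for z
  have "t' \<in> bdd_minorants G"
    unfolding bdd_minorants_def
  proof (intro CollectI conjI allI exI)
    show "t' \<in> borel_measurable borel"
      unfolding t'_def by measurable
    show "t' z \<le> max B 0" "0 \<le> t' z" "t' z \<le> cmod (G z)" for z
      using B[of z] t0[of z] tF[of z] by (auto simp: t'_def S_def indicator_def)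
  qed
  moreover have "\<alpha> (\<lambda>z. complex_of_real (t z)) = \<alpha> (\<lambda>z. complex_of_real (t' z))"
    using assms(3) Linf_bdd_minorant[OF t] Linf_bdd_minorant[OF \<open>t' \<in> bdd_minorants G\<close>]
    by (intro norm_AE_cong) (auto elim!: eventually_mono simp: t'_def S_def)
  ultimately show "ereal (\<alpha> (\<lambda>z. complex_of_real (t z))) \<le> alpha_ext \<alpha> G"
    using norm_le_alpha_ext by simp
qed

lemma alpha_ext_cong_AE:
  assumes "F \<in> borel_measurable borel" "G \<in> borel_measurable borel"
    and "AE z in circ. cmod (F z) = cmod (G z)"
  shows "alpha_ext \<alpha> F = alpha_ext \<alpha> G"
  using assms by (intro antisym alpha_ext_mono_AE) auto

lemma alpha_ext_zero: "alpha_ext \<alpha> (\<lambda>z. 0) = 0"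
proof (rule antisym)
  show "alpha_ext \<alpha> (\<lambda>z. 0) \<le> 0"
    unfolding alpha_ext_eq_SUP_bdd_minorants
  proof (rule SUP_least)
    fix t assume "t \<in> bdd_minorants (\<lambda>z. 0)"
    then have "t = (\<lambda>z. 0)"
      unfolding bdd_minorants_def by (auto intro: antisym)
    then show "ereal (\<alpha> (\<lambda>z. complex_of_real (t z))) \<le> 0"
      by (simp add: norm_const)
  qed
qed (rule alpha_ext_nonneg)

lemma alpha_ext_add:
  assumes [measurable]: "F \<in> borel_measurable borel" "G \<in> borel_measurable borel"
  shows "alpha_ext \<alpha> (\<lambda>z. F z + G z) \<le> alpha_ext \<alpha> F + alpha_ext \<alpha> G"
  unfolding alpha_ext_eq_SUP_bdd_minorants[of "\<lambda>z. F z + G z"]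
proof (rule SUP_least)
  fix t assume "t \<in> bdd_minorants (\<lambda>z. F z + G z)"
  then obtain t1 t2 where t1: "t1 \<in> bdd_minorants F" and t2: "t2 \<in> bdd_minorants G"
    and t: "\<And>z. t z = t1 z + t2 z"
    using bdd_minorant_split assms by blast
  have "\<alpha> (\<lambda>z. complex_of_real (t z)) \<le> \<alpha> (\<lambda>z. complex_of_real (t1 z)) + \<alpha> (\<lambda>z. complex_of_real (t2 z))"
    using norm_triangle[OF Linf_bdd_minorant[OF t1] Linf_bdd_minorant[OF t2]] by (simp add: t)
  then have "ereal (\<alpha> (\<lambda>z. complex_of_real (t z)))
      \<le> ereal (\<alpha> (\<lambda>z. complex_of_real (t1 z))) + ereal (\<alpha> (\<lambda>z. complex_of_real (t2 z)))"
    by simp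
  also have "\<dots> \<le> alpha_ext \<alpha> F + alpha_ext \<alpha> G"
    by (intro add_mono norm_le_alpha_ext t1 t2)
  finally show "ereal (\<alpha> (\<lambda>z. complex_of_real (t z))) \<le> alpha_ext \<alpha> F + alpha_ext \<alpha> G" .
qed

lemma alpha_ext_sum:
  assumes "finite A" "\<And>i. i \<in> A \<Longrightarrow> F i \<in> borel_measurable borel"
  shows "alpha_ext \<alpha> (\<lambda>z. \<Sum>i\<in>A. F i z) \<le> (\<Sum>i\<in>A. alpha_ext \<alpha> (F i))"
  using assms
proof (induction A rule: finite_induct)
  case (insert a A)
  have "alpha_ext \<alpha> (\<lambda>z. \<Sum>i\<in>insert a A. F i z) \<le> alpha_ext \<alpha> (F a) + alpha_ext \<alpha> (\<lambda>z. \<Sum>i\<in>A. F i z)"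
    using insert alpha_ext_add[of "F a" "\<lambda>z. \<Sum>i\<in>A. F i z"] by simp
  also have "\<dots> \<le> alpha_ext \<alpha> (F a) + (\<Sum>i\<in>A. alpha_ext \<alpha> (F i))"
    using insert by (intro add_left_mono) simp
  finally show ?case
    using insert by simp
qed (simp add: alpha_ext_zero)

lemma alpha_ext_rotate:
  assumes "cmod c = 1"
  shows "alpha_ext \<alpha> (\<lambda>z. F (c * z)) \<le> alpha_ext \<alpha> F"
  unfolding alpha_ext_eq_SUP_bdd_minorants[of "\<lambda>z. F (c * z)"]
proof (rule SUP_least)
  fix t assume t: "t \<in> bdd_minorants (\<lambda>z. F (c * z))"
  have c: "c * (cnj c * z) = z" for z
    using unimodular_mult_cnj[OF assms] by (simp add: mult.assoc[symmetric])
  have t': "(\<lambda>z. t (cnj c * z)) \<in> bdd_minorants F"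
    using t unfolding bdd_minorants_def by (auto simp: c) (metis c)
  have "\<alpha> (\<lambda>z. complex_of_real (t z)) = \<alpha> (\<lambda>z. complex_of_real (t (cnj c * z)))"
    using norm_rot[OF Linf_bdd_minorant[OF t] assms] by (simp add: rot_def)
  then show "ereal (\<alpha> (\<lambda>z. complex_of_real (t z))) \<le> alpha_ext \<alpha> F"
    using norm_le_alpha_ext[OF t'] by simp
qed

lemma AE_norm_le_if_alpha_ext_le_0:
  assumes [measurable]: "F \<in> borel_measurable borel" and "alpha_ext \<alpha> F \<le> 0" and "\<epsilon> > 0"
  shows "AE z in circ. cmod (F z) \<le> \<epsilon>"
proof -
  define S where "S = {z. \<epsilon> < cmod (F z)}"
  have [measurable]: "S \<in> sets borel"
    unfolding S_def by measurable
  define t where "t z = \<epsilon> * indicator S z" for z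
  have t: "t \<in> bdd_minorants F"
    unfolding bdd_minorants_def
  proof (intro CollectI conjI allI exI)
    show "t \<in> borel_measurable borel"
      unfolding t_def by measurable
    show "t z \<le> \<epsilon>" "0 \<le> t z" "t z \<le> cmod (F z)" for z
      using \<open>\<epsilon> > 0\<close> by (auto simp: t_def S_def indicator_def)
  qed
  then have "\<alpha> (\<lambda>z. complex_of_real (t z)) \<le> 0"
    using order_trans[OF norm_le_alpha_ext[OF t] assms(2)] by simp
  then have "\<alpha> (\<lambda>z. complex_of_real (t z)) = 0"
    using norm_nonneg[OF Linf_bdd_minorant[OF t]] by simp
  from norm_eq_0_AE[OF Linf_bdd_minorant[OF t] this] show ?thesis
  proof eventually_elim
    case (elim z)
    then have "t z = 0"
      by (simp only: of_real_eq_0_iff)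
    with \<open>\<epsilon> > 0\<close> show ?case
      by (auto simp: t_def S_def indicator_def split: if_splits)
  qed
qed

lemma AE_zero_if_alpha_ext_le_0:
  assumes "F \<in> borel_measurable borel" "alpha_ext \<alpha> F \<le> 0"
  shows "AE z in circ. F z = 0"
proof -
  have "AE z in circ. \<forall>k. cmod (F z) \<le> inverse (real (Suc k))"
    using AE_norm_le_if_alpha_ext_le_0[OF assms] by (simp add: AE_all_countable)
  then show ?thesis
  proof eventually_elim
    case (elim z)
    show "F z = 0"
    proof (rule ccontr)
      assume "F z \<noteq> 0"
      then obtain k where "inverse (real (Suc k)) < cmod (F z)"
        using reals_Archimedean[of "cmod (F z)"] by auto
      with elim show False
        by (meson not_le)
    qed
  qed
qed

section \<open>Closures of \<open>H\<^sup>\<infinity>\<close> and of \<open>H\<^sup>\<infinity>(z\<^sup>n)\<close>\<close>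

lemma alpha_ext_freq_component_le:
  assumes "n \<ge> 1" and [measurable]: "D \<in> borel_measurable borel"
  shows "alpha_ext \<alpha> (freq_component n j D) \<le> (\<Sum>\<omega>\<in>unit_roots n. alpha_ext \<alpha> D)"
proof -
  have "freq_component n j D = (\<lambda>z. \<Sum>\<omega>\<in>unit_roots n. cnj \<omega> ^ j / of_nat n * D (\<omega> * z))"
    unfolding freq_component_def by (simp add: fun_eq_iff sum_divide_distrib)
  then have "alpha_ext \<alpha> (freq_component n j D)
      \<le> (\<Sum>\<omega>\<in>unit_roots n. alpha_ext \<alpha> (\<lambda>z. cnj \<omega> ^ j / of_nat n * D (\<omega> * z)))"
    using alpha_ext_sum[OF finite_unit_roots[OF assms(1)]] by simp
  also have "\<dots> \<le> (\<Sum>\<omega>\<in>unit_roots n. alpha_ext \<alpha> D)"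
  proof (rule sum_mono)
    fix \<omega> assume "\<omega> \<in> unit_roots n"
    then have \<omega>: "cmod \<omega> = 1"
      by (rule norm_unit_root[OF assms(1)])
    have "alpha_ext \<alpha> (\<lambda>z. cnj \<omega> ^ j / of_nat n * D (\<omega> * z)) \<le> alpha_ext \<alpha> (\<lambda>z. D (\<omega> * z))"
    proof (rule alpha_ext_mono)
      fix z
      have "cmod (cnj \<omega> ^ j / of_nat n) \<le> 1"
        using \<omega> assms(1) by (simp add: norm_power norm_divide)
      then show "cmod (cnj \<omega> ^ j / of_nat n * D (\<omega> * z)) \<le> cmod (D (\<omega> * z))"
        unfolding norm_mult by (rule mult_left_le_one_le[OF norm_ge_zero norm_ge_zero])
    qed
    also have "\<dots> \<le> alpha_ext \<alpha> D"
      by (rule alpha_ext_rotate[OF \<omega>])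
    finally show "alpha_ext \<alpha> (\<lambda>z. cnj \<omega> ^ j / of_nat n * D (\<omega> * z)) \<le> alpha_ext \<alpha> D" .
  qed
  finally show ?thesis .
qed

lemma alpha_closure_rotate_AE:
  assumes "g \<in> alpha_closure \<alpha> S" "cmod \<zeta> = 1"
    and S: "\<And>h. h \<in> S \<Longrightarrow> h \<in> borel_measurable borel" "\<And>h z. h \<in> S \<Longrightarrow> h (\<zeta> * z) = h z"
  shows "AE z in circ. g (\<zeta> * z) = g z"
proof -
  obtain h where [measurable]: "g \<in> borel_measurable borel" and h: "\<And>k. h k \<in> S"
    and lim: "(\<lambda>k. alpha_ext \<alpha> (\<lambda>z. g z - h k z)) \<longlonglongrightarrow> 0"
    using assms(1) unfolding alpha_closure_def by auto
  have [measurable]: "h k \<in> borel_measurable borel" for k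
    using S(1)[OF h] .
  have "alpha_ext \<alpha> (\<lambda>z. g (\<zeta> * z) - g z) \<le> ereal 2 * alpha_ext \<alpha> (\<lambda>z. g z - h k z)" for k
  proof -
    have "(\<lambda>z. g (\<zeta> * z) - g z) = (\<lambda>z. (g (\<zeta> * z) - h k (\<zeta> * z)) + (h k z - g z))"
      using S(2)[OF h] by (simp add: fun_eq_iff)
    then have "alpha_ext \<alpha> (\<lambda>z. g (\<zeta> * z) - g z)
        \<le> alpha_ext \<alpha> (\<lambda>z. g (\<zeta> * z) - h k (\<zeta> * z)) + alpha_ext \<alpha> (\<lambda>z. h k z - g z)"
      using alpha_ext_add[of "\<lambda>z. g (\<zeta> * z) - h k (\<zeta> * z)" "\<lambda>z. h k z - g z"] by simp
    also have "\<dots> \<le> alpha_ext \<alpha> (\<lambda>z. g z - h k z) + alpha_ext \<alpha> (\<lambda>z. g z - h k z)"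
      using alpha_ext_rotate[OF assms(2), of "\<lambda>z. g z - h k z"]
        alpha_ext_mono[of "\<lambda>z. h k z - g z" "\<lambda>z. g z - h k z"]
      by (simp add: norm_minus_commute add_mono)
    finally show ?thesis
      by (simp add: mult_2_ereal[symmetric])
  qed
  moreover have "(\<lambda>k. ereal 2 * alpha_ext \<alpha> (\<lambda>z. g z - h k z)) \<longlonglongrightarrow> ereal 2 * 0"
    using lim by (intro tendsto_cmult_ereal) simp_all
  ultimately have "alpha_ext \<alpha> (\<lambda>z. g (\<zeta> * z) - g z) \<le> 0"
    by (intro tendsto_le[OF trivial_limit_sequentially _ tendsto_const]) auto
  from AE_zero_if_alpha_ext_le_0[OF _ this] show ?thesis
    by simp
qed

lemma pow_component_in_M_alpha:
  assumes "f \<in> H_alpha \<alpha>" "n \<ge> 1" "j < n"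
  shows "pow_component n j f \<in> M_alpha \<alpha> n"
proof -
  obtain h where [measurable]: "f \<in> borel_measurable borel" and h: "\<And>k. h k \<in> Hinf"
    and lim: "(\<lambda>k. alpha_ext \<alpha> (\<lambda>z. f z - h k z)) \<longlonglongrightarrow> 0"
    using assms(1) unfolding H_alpha_def alpha_closure_def by auto
  have [measurable]: "h k \<in> borel_measurable borel" for k
    using h by (rule Hinf_measurable)
  define a where "a k z = pow_factor n (pow_component n j (h k)) (z ^ n)" for k z
  have "a k \<in> Hinf_pow n" for k
    unfolding Hinf_pow_def a_def using Hinf_pow_factor_pow_component[OF h assms(2,3)] by blast
  moreover have "(\<lambda>k. alpha_ext \<alpha> (\<lambda>z. pow_component n j f z - a k z)) \<longlonglongrightarrow> 0"
  proof (rule tendsto_zero_ereal_sum_bound[OF finite_unit_roots[OF assms(2)] alpha_ext_nonneg])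
    fix k
    have "AE z in circ. a k z = pow_component n j (h k) z"
      using AE_circ_norm by eventually_elim (auto simp: a_def intro: pow_factor_pow_component[OF assms(2)])
    then have "AE z in circ. cmod (pow_component n j f z - a k z) = cmod (freq_component n j (\<lambda>z. f z - h k z) z)"
      using AE_circ_norm
      by eventually_elim (simp add: pow_component_def freq_component_diff norm_mult norm_power
          flip: right_diff_distrib)
    then have "alpha_ext \<alpha> (\<lambda>z. pow_component n j f z - a k z) = alpha_ext \<alpha> (freq_component n j (\<lambda>z. f z - h k z))"
      unfolding a_def by (intro alpha_ext_cong_AE) auto
    also have "\<dots> \<le> (\<Sum>\<omega>\<in>unit_roots n. alpha_ext \<alpha> (\<lambda>z. f z - h k z))"
      by (rule alpha_ext_freq_component_le[OF assms(2)]) simp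
    finally show "alpha_ext \<alpha> (\<lambda>z. pow_component n j f z - a k z) \<le> (\<Sum>\<omega>\<in>unit_roots n. alpha_ext \<alpha> (\<lambda>z. f z - h k z))" .
  qed (rule lim)
  ultimately show ?thesis
    unfolding M_alpha_def alpha_closure_def by auto
qed

lemma sum_power_mult_in_H_alpha:
  assumes "\<forall>j<n. g j \<in> M_alpha \<alpha> n" "n \<ge> 1"
  shows "(\<lambda>z. \<Sum>j<n. z ^ j * g j z) \<in> H_alpha \<alpha>"
proof -
  have "\<forall>j\<in>{..<n}. \<exists>H. (\<forall>k. H k \<in> Hinf_pow n) \<and> (\<lambda>k. alpha_ext \<alpha> (\<lambda>z. g j z - H k z)) \<longlonglongrightarrow> 0"
    using assms(1) unfolding M_alpha_def alpha_closure_def by auto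
  then obtain H where H: "\<And>j k. j < n \<Longrightarrow> H j k \<in> Hinf_pow n"
    and lim: "\<And>j. j < n \<Longrightarrow> (\<lambda>k. alpha_ext \<alpha> (\<lambda>z. g j z - H j k z)) \<longlonglongrightarrow> 0"
    by (metis bchoice lessThan_iff)
  have [measurable]: "g j \<in> borel_measurable borel" "H j k \<in> borel_measurable borel" if "j < n" for j k
    using assms(1) Hinf_pow_measurable[OF H] that unfolding M_alpha_def alpha_closure_def by auto
  define A where "A k z = (\<Sum>j<n. z ^ j * H j k z)" for k z
  have "A k \<in> Hinf" for k
    unfolding A_def using H assms(2) by (intro Hinf_sum Hinf_pow_mult_power) auto
  moreover have "(\<lambda>k. alpha_ext \<alpha> (\<lambda>z. (\<Sum>j<n. z ^ j * g j z) - A k z)) \<longlonglongrightarrow> 0"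
  proof (rule tendsto_zero_ereal_sum_bound[OF finite_lessThan alpha_ext_nonneg])
    fix k
    have "alpha_ext \<alpha> (\<lambda>z. (\<Sum>j<n. z ^ j * g j z) - A k z) = alpha_ext \<alpha> (\<lambda>z. \<Sum>j<n. z ^ j * (g j z - H j k z))"
      unfolding A_def by (simp add: right_diff_distrib sum_subtractf)
    also have "\<dots> \<le> (\<Sum>j<n. alpha_ext \<alpha> (\<lambda>z. z ^ j * (g j z - H j k z)))"
      by (rule alpha_ext_sum) auto
    also have "\<dots> \<le> (\<Sum>j<n. alpha_ext \<alpha> (\<lambda>z. g j z - H j k z))"
      using AE_circ_norm by (intro sum_mono alpha_ext_mono_AE) (auto elim!: eventually_mono simp: norm_mult norm_power)
    finally show "alpha_ext \<alpha> (\<lambda>z. (\<Sum>j<n. z ^ j * g j z) - A k z) \<le> (\<Sum>j<n. alpha_ext \<alpha> (\<lambda>z. g j z - H j k z))" .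
  qed (use lim in auto)
  ultimately show ?thesis
    unfolding H_alpha_def alpha_closure_def by auto
qed

lemma sum_power_mult_eq_0_AE:
  assumes "\<forall>j<n. g j \<in> M_alpha \<alpha> n" "n \<ge> 1" "i < n"
    and "AE z in circ. (\<Sum>j<n. z ^ j * g j z) = 0"
  shows "AE z in circ. z ^ i * g i z = 0"
proof -
  have [measurable]: "g j \<in> borel_measurable borel" if "j < n" for j
    using assms(1) that unfolding M_alpha_def alpha_closure_def by auto
  have rotated_sum: "AE z in circ. (\<Sum>j<n. (\<omega> * z) ^ j * g j (\<omega> * z)) = 0" if "\<omega> \<in> unit_roots n" for \<omega>
    using assms(4) AE_circ_monomial[OF norm_unit_root[OF assms(2) that] order_refl,
        of "\<lambda>w. (\<Sum>j<n. w ^ j * g j w) = 0"] by simp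
  have "AE z in circ. g j (\<omega> * z) = g j z" if "\<omega> \<in> unit_roots n" "j < n" for \<omega> j
  proof (rule alpha_closure_rotate_AE[OF _ norm_unit_root[OF assms(2) that(1)]])
    show "g j \<in> alpha_closure \<alpha> (Hinf_pow n)"
      using assms(1) that(2) by (simp add: M_alpha_def)
  qed (simp_all add: Hinf_pow_measurable Hinf_pow_rotate[OF _ that(1)])
  then have invariant: "AE z in circ. \<forall>j\<in>{..<n}. g j (\<omega> * z) = g j z" if "\<omega> \<in> unit_roots n" for \<omega>
    using that by (intro AE_finite_allI) simp_all
  have "AE z in circ. \<forall>\<omega>\<in>unit_roots n.
      (\<Sum>j<n. (\<omega> * z) ^ j * g j (\<omega> * z)) = 0 \<and> (\<forall>j\<in>{..<n}. g j (\<omega> * z) = g j z)"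
    by (intro AE_finite_allI[OF finite_unit_roots[OF assms(2)]] AE_conjI) (simp_all add: rotated_sum invariant)
  then show ?thesis
  proof eventually_elim
    case (elim z)
    then have "z ^ i * g i z = freq_component n i (\<lambda>z. \<Sum>j<n. z ^ j * g j z) z"
      using freq_component_invariant_sum[OF assms(3)] by simp
    also have "\<dots> = 0"
    proof -
      from elim have "\<forall>\<omega>\<in>unit_roots n. (\<Sum>j<n. (\<omega> * z) ^ j * g j (\<omega> * z)) = 0"
        by blast
      then show ?thesis
        by (simp add: freq_component_def)
    qed
    finally show ?case .
  qed
qed

end

theorem lemma4p2:
  fixes \<alpha> :: "(complex \<Rightarrow> complex) \<Rightarrow> real" and n :: nat
  assumes "rot_sym_norm \<alpha>" and "continuous_norm \<alpha>" and "n \<ge> 1"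
  shows "(\<forall>f\<in>H_alpha \<alpha>. \<exists>g. (\<forall>j<n. g j \<in> M_alpha \<alpha> n) \<and>
            (AE z in circ. f z = (\<Sum>j<n. z ^ j * g j z))) \<and>
     (\<forall>g. (\<forall>j<n. g j \<in> M_alpha \<alpha> n) \<longrightarrow> (\<lambda>z. \<Sum>j<n. z ^ j * g j z) \<in> H_alpha \<alpha>) \<and>
     (\<forall>g. (\<forall>j<n. g j \<in> M_alpha \<alpha> n) \<and> (AE z in circ. (\<Sum>j<n. z ^ j * g j z) = 0)
            \<longrightarrow> (\<forall>j<n. AE z in circ. z ^ j * g j z = 0))"
proof -
  interpret rot_sym \<alpha>
    by unfold_locales (rule assms(1))
  have "AE z in circ. f z = (\<Sum>j<n. z ^ j * pow_component n j f z)" for f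
    using AE_circ_norm by eventually_elim (rule sum_pow_components[symmetric, OF _ assms(3)])
  then show ?thesis
    using pow_component_in_M_alpha[OF _ assms(3)] sum_power_mult_in_H_alpha[OF _ assms(3)]
      sum_power_mult_eq_0_AE[OF _ assms(3)]
    by (intro conjI ballI allI impI exI[of _ "\<lambda>j. pow_component n j _"]) auto
qed

end
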